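(* Let $(X,d)$ be a compact doubling metric space with $\operatorname{diam}(X,d)=1/2$ and $(\mathcal S,D_2)$ a hyperbolic filling with parameters $a\ge\lambda\ge6$. Let $\rho:\mathcal S\to(0,\infty)$ satisfy (H1), (H2) and (H3'). Then there is a constant $K_2\ge1$ such that for all distinct $x,y\in X$ there exists $k_0$ (depending on $x,y$) such that for all $k\ge k_0$, if $u,v\in\mathcal S_k$ with $x\in B_u$, $y\in B_v$, then every path $\gamma$ in $(\mathcal S,D_2)$ joining $u$ and $v$ satisfies $\hat\ell_1(\gamma)\ge K_2^{-1}\pi(c(x,y))$.
   Context: Hyperbolic filling: $X_0\subset X_1\subset\cdots$ increasing, $X_n$ maximal $a^{-n}$-separated in $X$ ($X_0=\{x_0\}$); $\mathcal S_n=\{(x,n):x\in X_n\}$, $\mathcal S=\bigcup_n\mathcal S_n$, $\pi_1(x,n)=x$, $\pi_2(x,n)=n$, $v_0=(x_0,0)$, $B_v=B(\pi_1(v),a^{-\pi_2(v)})$. Each $(x,n)$, $n\ge1$, has a fixed parent $(y,n-1)$ with $d(x,y)=\min_{z\in X_{n-1}}d(x,z)$; genealogy $g(v)=(v_0,\dots,v_k=v)$. Graph $(\mathcal S,D_2)$: edges vertex–parent (vertical) and horizontal edges between distinct $(x,n),(y,n)$ with $B(x,\lambda a^{-n})\cap B(y,\lambda a^{-n})\ne\emptyset$. Paths: vertex sequences with consecutive ones adjacent. For $w\in\mathcal S_k$, $\Gamma_k(w)$: horizontal paths $(u_1,\dots,u_n)$ in $\mathcal S_{k+1}$ with $\pi_1(u_1)\in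 B_w$, $\pi_1(u_n)\notin B(\pi_1(w),2a^{-k})$. $\pi(u)=\prod_{w\in g(u)}\rho(w)$; $\rho^*(u)=\min\{\rho(w):\pi_2(w)=\pi_2(u),D_2(u,w)\le1\}$, $\pi^*(u)$ the same with $\pi$; $L_h(\gamma,\rho)=\sum_{j}\rho^*(u_j)\wedge\rho^*(u_{j+1})$ for horizontal $\gamma=(u_1,\dots,u_N)$. For distinct $x,y$: $\tilde n$ largest with $\{x,y\}\subset B(\tilde z,2a^{-\tilde n})$ for some $(\tilde z,\tilde n)\in\mathcal S$, $c(x,y)$ the set of such $(\tilde z,\tilde n)$, $\pi(c(x,y))=\max_{c(x,y)}\pi$. (H1) $0<\eta_-\le\rho\le\eta_+<1$. (H2) $\pi(u)\le K_0\pi(w)$ for horizontally adjacent $u,w$, some $K_0\ge1$. (H3') for all $k\ge0$, $w\in\mathcal S_k$, $\gamma\in\Gamma_k(w)$: $L_h(\gamma,\rho)\ge1$. Edge length: $\hat\ell_1(\{u,w\})=\pi^*(u)\wedge\pi^*(w)$ for a horizontal edge, and $\hat\ell_1(\{u,w\})=K_0\eta_-^{-1}\pi^*(w)$ if $u$ is the parent of $w$; for a path $\gamma=(v_1,\dots,v_N)$, $\hat\ell_1(\gamma)=\sum_{i=1}^{N-1}\hat\ell_1(\{v_i,v_{i+1}\})$. *)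

theory Defs
  imports "HOL-Analysis.Analysis"
begin

definition Xball :: "'a::metric_space set \<Rightarrow> 'a \<Rightarrow> real \<Rightarrow> 'a set" where
  "Xball X x r = ball x r \<inter> X"

definition doubling :: "'a::metric_space set \<Rightarrow> bool" where
  "doubling X \<longleftrightarrow> (\<exists>N::nat. \<forall>x\<in>X. \<forall>r>0. \<exists>C. finite C \<and> C \<subseteq> X \<and> card C \<le> N \<and>
      Xball X x (2*r) \<subseteq> (\<Union>c\<in>C. Xball X c r))"

definition separated :: "real \<Rightarrow> 'a::metric_space set \<Rightarrow> bool" where
  "separated \<epsilon> A \<longleftrightarrow> (\<forall>x\<in>A. \<forall>y\<in>A. x \<noteq> y \<longrightarrow> dist x y \<ge> \<epsilon>)"

definition maximal_separated :: "real \<Rightarrow> 'a::metric_space set \<Rightarrow> 'a set \<Rightarrow> bool" where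
  "maximal_separated \<epsilon> A X \<longleftrightarrow> A \<subseteq> X \<and> separated \<epsilon> A \<and>
      (\<forall>z\<in>X - A. \<not> separated \<epsilon> (insert z A))"

text \<open>Data: nested sets Xs n, base point x0, and parent map par: the parent of
  (x, Suc n) is (par x (Suc n), n).\<close>
definition hyperbolic_filling ::
  "'a::metric_space set \<Rightarrow> real \<Rightarrow> real \<Rightarrow> 'a \<Rightarrow> (nat \<Rightarrow> 'a set) \<Rightarrow> ('a \<Rightarrow> nat \<Rightarrow> 'a) \<Rightarrow> bool" where
  "hyperbolic_filling X a lam x0 Xs par \<longleftrightarrow>
     Xs 0 = {x0} \<and> x0 \<in> X \<and>
     (\<forall>n. Xs n \<subseteq> Xs (Suc n)) \<and>
     (\<forall>n. maximal_separated (a powi (- int n)) (Xs n) X) \<and>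
     (\<forall>n. \<forall>x\<in>Xs (Suc n). par x (Suc n) \<in> Xs n \<and>
          (\<forall>z\<in>Xs n. dist x (par x (Suc n)) \<le> dist x z))"

definition vertices :: "(nat \<Rightarrow> 'a set) \<Rightarrow> ('a \<times> nat) set" where
  "vertices Xs = {(x,n). x \<in> Xs n}"

definition level :: "(nat \<Rightarrow> 'a set) \<Rightarrow> nat \<Rightarrow> ('a \<times> nat) set" where
  "level Xs k = {(x,n). x \<in> Xs n \<and> n = k}"

definition Bv :: "'a::metric_space set \<Rightarrow> real \<Rightarrow> 'a \<times> nat \<Rightarrow> 'a set" where
  "Bv X a v = Xball X (fst v) (a powi (- int (snd v)))"

definition is_parent :: "(nat \<Rightarrow> 'a set) \<Rightarrow> ('a \<Rightarrow> nat \<Rightarrow> 'a) \<Rightarrow> 'a \<times> nat \<Rightarrow> 'a \<times> nat \<Rightarrow> bool" where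
  "is_parent Xs par u w \<longleftrightarrow> w \<in> vertices Xs \<and> snd w \<ge> 1 \<and>
      u = (par (fst w) (snd w), snd w - 1)"

definition horiz_adj ::
  "'a::metric_space set \<Rightarrow> real \<Rightarrow> real \<Rightarrow> (nat \<Rightarrow> 'a set) \<Rightarrow> 'a \<times> nat \<Rightarrow> 'a \<times> nat \<Rightarrow> bool" where
  "horiz_adj X a lam Xs u w \<longleftrightarrow> u \<in> vertices Xs \<and> w \<in> vertices Xs \<and> snd u = snd w \<and> u \<noteq> w \<and>
      Xball X (fst u) (lam * a powi (- int (snd u))) \<inter> Xball X (fst w) (lam * a powi (- int (snd w))) \<noteq> {}"

definition adj ::
  "'a::metric_space set \<Rightarrow> real \<Rightarrow> real \<Rightarrow> (nat \<Rightarrow> 'a set) \<Rightarrow> ('a \<Rightarrow> nat \<Rightarrow> 'a) \<Rightarrow> 'a \<times> nat \<Rightarrow> 'a \<times> nat \<Rightarrow> bool" where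
  "adj X a lam Xs par u w \<longleftrightarrow> is_parent Xs par u w \<or> is_parent Xs par w u \<or> horiz_adj X a lam Xs u w"

definition is_path ::
  "'a::metric_space set \<Rightarrow> real \<Rightarrow> real \<Rightarrow> (nat \<Rightarrow> 'a set) \<Rightarrow> ('a \<Rightarrow> nat \<Rightarrow> 'a) \<Rightarrow> ('a \<times> nat) list \<Rightarrow> bool" where
  "is_path X a lam Xs par \<gamma> \<longleftrightarrow> \<gamma> \<noteq> [] \<and> set \<gamma> \<subseteq> vertices Xs \<and>
      (\<forall>i. Suc i < length \<gamma> \<longrightarrow> adj X a lam Xs par (\<gamma> ! i) (\<gamma> ! Suc i))"

definition is_horiz_path ::
  "'a::metric_space set \<Rightarrow> real \<Rightarrow> real \<Rightarrow> (nat \<Rightarrow> 'a set) \<Rightarrow> ('a \<times> nat) list \<Rightarrow> bool" where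
  "is_horiz_path X a lam Xs \<gamma> \<longleftrightarrow> \<gamma> \<noteq> [] \<and> set \<gamma> \<subseteq> vertices Xs \<and>
      (\<forall>i. Suc i < length \<gamma> \<longrightarrow> horiz_adj X a lam Xs (\<gamma> ! i) (\<gamma> ! Suc i))"

definition Gamma ::
  "'a::metric_space set \<Rightarrow> real \<Rightarrow> real \<Rightarrow> (nat \<Rightarrow> 'a set) \<Rightarrow> nat \<Rightarrow> 'a \<times> nat \<Rightarrow> ('a \<times> nat) list set" where
  "Gamma X a lam Xs k w = {\<gamma>. is_horiz_path X a lam Xs \<gamma> \<and> set \<gamma> \<subseteq> level Xs (Suc k) \<and>
      fst (hd \<gamma>) \<in> Bv X a w \<and> fst (last \<gamma>) \<notin> Xball X (fst w) (2 * a powi (- int k))}"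

fun piw :: "('a \<times> nat \<Rightarrow> real) \<Rightarrow> ('a \<Rightarrow> nat \<Rightarrow> 'a) \<Rightarrow> 'a \<times> nat \<Rightarrow> real" where
  "piw \<rho> par (x, 0) = \<rho> (x, 0)"
| "piw \<rho> par (x, Suc n) = \<rho> (x, Suc n) * piw \<rho> par (par x (Suc n), n)"

definition near_same_level ::
  "'a::metric_space set \<Rightarrow> real \<Rightarrow> real \<Rightarrow> (nat \<Rightarrow> 'a set) \<Rightarrow> ('a \<Rightarrow> nat \<Rightarrow> 'a) \<Rightarrow> 'a \<times> nat \<Rightarrow> ('a \<times> nat) set" where
  "near_same_level X a lam Xs par u = {w \<in> vertices Xs. snd w = snd u \<and> (w = u \<or> adj X a lam Xs par u w)}"

definition star_of ::
  "('a \<times> nat \<Rightarrow> real) \<Rightarrow> 'a::metric_space set \<Rightarrow> real \<Rightarrow> real \<Rightarrow> (nat \<Rightarrow> 'a set) \<Rightarrow> ('a \<Rightarrow> nat \<Rightarrow> 'a) \<Rightarrow> 'a \<times> nat \<Rightarrow> real" where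
  "star_of f X a lam Xs par u = Min (f ` near_same_level X a lam Xs par u)"

definition L_h ::
  "('a \<times> nat \<Rightarrow> real) \<Rightarrow> 'a::metric_space set \<Rightarrow> real \<Rightarrow> real \<Rightarrow> (nat \<Rightarrow> 'a set) \<Rightarrow> ('a \<Rightarrow> nat \<Rightarrow> 'a) \<Rightarrow> ('a \<times> nat) list \<Rightarrow> real" where
  "L_h \<rho> X a lam Xs par \<gamma> = (\<Sum>j<length \<gamma> - 1.
      min (star_of \<rho> X a lam Xs par (\<gamma> ! j)) (star_of \<rho> X a lam Xs par (\<gamma> ! Suc j)))"

definition edge_len ::
  "('a \<times> nat \<Rightarrow> real) \<Rightarrow> real \<Rightarrow> real \<Rightarrow> 'a::metric_space set \<Rightarrow> real \<Rightarrow> real \<Rightarrow> (nat \<Rightarrow> 'a set) \<Rightarrow> ('a \<Rightarrow> nat \<Rightarrow> 'a)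
     \<Rightarrow> 'a \<times> nat \<Rightarrow> 'a \<times> nat \<Rightarrow> real" where
  "edge_len \<rho> K0 \<eta>m X a lam Xs par u w =
     (let ps = star_of (piw \<rho> par) X a lam Xs par in
      if snd u = snd w then min (ps u) (ps w)
      else if is_parent Xs par u w then K0 / \<eta>m * ps w
      else K0 / \<eta>m * ps u)"

definition path_len ::
  "('a \<times> nat \<Rightarrow> real) \<Rightarrow> real \<Rightarrow> real \<Rightarrow> 'a::metric_space set \<Rightarrow> real \<Rightarrow> real \<Rightarrow> (nat \<Rightarrow> 'a set) \<Rightarrow> ('a \<Rightarrow> nat \<Rightarrow> 'a)
     \<Rightarrow> ('a \<times> nat) list \<Rightarrow> real" where
  "path_len \<rho> K0 \<eta>m X a lam Xs par \<gamma> =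
     (\<Sum>i<length \<gamma> - 1. edge_len \<rho> K0 \<eta>m X a lam Xs par (\<gamma> ! i) (\<gamma> ! Suc i))"

definition c_level :: "'a::metric_space set \<Rightarrow> real \<Rightarrow> (nat \<Rightarrow> 'a set) \<Rightarrow> 'a \<Rightarrow> 'a \<Rightarrow> nat" where
  "c_level X a Xs x y = (GREATEST n. \<exists>z\<in>Xs n. {x, y} \<subseteq> Xball X z (2 * a powi (- int n)))"

definition c_set :: "'a::metric_space set \<Rightarrow> real \<Rightarrow> (nat \<Rightarrow> 'a set) \<Rightarrow> 'a \<Rightarrow> 'a \<Rightarrow> ('a \<times> nat) set" where
  "c_set X a Xs x y = (let n = c_level X a Xs x y in
      {(z, n) | z. z \<in> Xs n \<and> {x, y} \<subseteq> Xball X z (2 * a powi (- int n))})"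

definition pi_c :: "('a \<times> nat \<Rightarrow> real) \<Rightarrow> ('a \<Rightarrow> nat \<Rightarrow> 'a) \<Rightarrow> 'a::metric_space set \<Rightarrow> real \<Rightarrow> (nat \<Rightarrow> 'a set) \<Rightarrow> 'a \<Rightarrow> 'a \<Rightarrow> real" where
  "pi_c \<rho> par X a Xs x y = Max (piw \<rho> par ` c_set X a Xs x y)"

end

theory Submission
  imports Defs
begin

(*
  Let n be the level of c(x,y). A path from B_u to B_v is pushed up the filling one level at a
  time, without becoming longer, until it lies on the levels at most n + 3. On the top level
  l + 1 the path consists of horizontal runs, and a run is replaced by a horizontal walk through
  parents: every time the run leaves the ball of radius 2 a^-l around the current parent W,
  hypothesis (H3') makes its rho-length at least 1, hence its length at least pi*(W), which pays
  for a new horizontal edge at W. A vertical edge pays for the parent at its upper end by (H1)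
  and (H2). Since d(x,y) > a^-(n+1), the lowered path, which starts near x and ends near y on
  level n + 3, has to leave the ball of radius 2 a^-(n+2) around the parent W of its first
  vertex, and this costs at least pi*(W). Finally (H1) and (H2) give
  pi*(W) >= eta^2 pi(c) / K0^2 for the vertex c of c(x,y) of maximal weight, so K2 = K0^2 / eta^2.
*)

section \<open>Sums along lists\<close>

fun chain_sum :: "('v \<Rightarrow> 'v \<Rightarrow> 'b::comm_monoid_add) \<Rightarrow> 'v list \<Rightarrow> 'b" where
  "chain_sum f [] = 0"
| "chain_sum f [_] = 0"
| "chain_sum f (p # q # r) = f p q + chain_sum f (q # r)"

lemma sum_nth_eq_chain_sum: "(\<Sum>i<length xs - 1. f (xs ! i) (xs ! Suc i)) = chain_sum f xs"
proof (induction f xs rule: chain_sum.induct)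
  case (3 f p q r)
  have "(\<Sum>i<length (p # q # r) - 1. f ((p # q # r) ! i) ((p # q # r) ! Suc i))
      = f p q + (\<Sum>i<length (q # r) - 1. f ((q # r) ! i) ((q # r) ! Suc i))"
    by (simp add: sum.lessThan_Suc_shift del: sum.lessThan_Suc)
  then show ?case using 3 by simp
qed auto

lemma chain_sum_append_Cons:
  "chain_sum f (xs @ y # ys) = chain_sum f (xs @ [y]) + chain_sum f (y # ys)"
  by (induction f xs rule: chain_sum.induct) (auto simp: add.assoc)

lemma chain_sum_snoc: "xs \<noteq> [] \<Longrightarrow> chain_sum f (xs @ [y]) = chain_sum f xs + f (last xs) y"
  by (induction f xs rule: chain_sum.induct) (auto simp: add.assoc)

lemma chain_sum_append:
  "xs \<noteq> [] \<Longrightarrow> ys \<noteq> [] \<Longrightarrow>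
    chain_sum f (xs @ ys) = chain_sum f xs + f (last xs) (hd ys) + chain_sum f ys"
  using chain_sum_append_Cons[of f xs "hd ys" "tl ys"] chain_sum_snoc[of xs f "hd ys"] by simp

lemma chain_sum_mono:
  fixes f g :: "'v \<Rightarrow> 'v \<Rightarrow> 'b::ordered_comm_monoid_add"
  shows "(\<And>p q. p \<in> set xs \<Longrightarrow> q \<in> set xs \<Longrightarrow> f p q \<le> g p q) \<Longrightarrow> chain_sum f xs \<le> chain_sum g xs"
  by (induction f xs rule: chain_sum.induct) (auto intro: add_mono)

lemma chain_sum_nonneg:
  fixes f :: "'v \<Rightarrow> 'v \<Rightarrow> 'b::ordered_comm_monoid_add"
  shows "(\<And>p q. p \<in> set xs \<Longrightarrow> q \<in> set xs \<Longrightarrow> 0 \<le> f p q) \<Longrightarrow> 0 \<le> chain_sum f xs"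
  by (induction f xs rule: chain_sum.induct) auto

lemma chain_sum_cong:
  "(\<And>p q. p \<in> set xs \<Longrightarrow> q \<in> set xs \<Longrightarrow> f p q = g p q) \<Longrightarrow> chain_sum f xs = chain_sum g xs"
  by (induction f xs rule: chain_sum.induct) auto

lemma chain_sum_const_mult:
  fixes f :: "'v \<Rightarrow> 'v \<Rightarrow> 'b::semiring_0"
  shows "chain_sum (\<lambda>p q. c * f p q) xs = c * chain_sum f xs"
  by (induction f xs rule: chain_sum.induct) (auto simp: distrib_left)

section \<open>Geometry of the filling\<close>

locale hyp_filling =
  fixes X :: "'a::metric_space set" and a lam :: real and x0 :: 'a
    and Xs :: "nat \<Rightarrow> 'a set" and par :: "'a \<Rightarrow> nat \<Rightarrow> 'a"
  assumes compact_X: "compact X"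
    and filling: "hyperbolic_filling X a lam x0 Xs par"
    and lam_le_a: "lam \<le> a" and lam_ge_6: "6 \<le> lam"
begin

definition rad :: "nat \<Rightarrow> real" where "rad n = a powi (- int n)"

abbreviation V where "V \<equiv> vertices Xs"
abbreviation edge where "edge \<equiv> adj X a lam Xs par"
abbreviation hedge where "hedge \<equiv> horiz_adj X a lam Xs"

definition parent :: "'a \<times> nat \<Rightarrow> 'a \<times> nat" where
  "parent v = (par (fst v) (snd v), snd v - 1)"

definition walk :: "('a \<times> nat) list \<Rightarrow> bool" where
  "walk \<gamma> \<longleftrightarrow> \<gamma> \<noteq> [] \<and> set \<gamma> \<subseteq> V \<and> successively edge \<gamma>"

definition hwalk :: "nat \<Rightarrow> ('a \<times> nat) list \<Rightarrow> bool" where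
  "hwalk l \<gamma> \<longleftrightarrow> \<gamma> \<noteq> [] \<and> set \<gamma> \<subseteq> level Xs l \<and> successively hedge \<gamma>"

lemma a_ge_6: "6 \<le> a"
  using lam_le_a lam_ge_6 by linarith

lemma rad_eq: "rad n = inverse (a ^ n)"
  by (simp add: rad_def power_int_minus)

lemma rad_pos: "0 < rad n"
  using a_ge_6 by (simp add: rad_eq)

lemma rad_Suc: "rad (Suc n) = rad n / a"
  by (simp add: rad_eq divide_inverse mult.commute)

lemma rad_Suc_le: "rad (Suc n) \<le> rad n / 6"
  unfolding rad_Suc using a_ge_6 rad_pos[of n] by (intro divide_left_mono) auto

lemma lam_rad_Suc_le: "lam * rad (Suc n) \<le> rad n"
proof -
  have "lam * rad (Suc n) = lam / a * rad n" by (simp add: rad_Suc)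
  also have "\<dots> \<le> 1 * rad n" using lam_le_a a_ge_6 rad_pos[of n] by (intro mult_right_mono) auto
  finally show ?thesis by simp
qed

lemma mult_rad_le_lam_rad: "c \<le> 6 \<Longrightarrow> c * rad n \<le> lam * rad n"
  using lam_ge_6 rad_pos[of n] by (intro mult_right_mono) auto

lemma lam_rad_pos: "0 < lam * rad n"
  using lam_ge_6 rad_pos[of n] by simp

lemma rad_antimono: "m \<le> n \<Longrightarrow> rad n \<le> rad m"
  unfolding rad_eq using a_ge_6 by (intro le_imp_inverse_le power_increasing) auto

lemma ex_rad_less: "0 < e \<Longrightarrow> \<exists>n. rad n < e"
proof -
  assume e: "0 < e"
  obtain n where "1 / e < a ^ n" using real_arch_pow[of a "1/e"] a_ge_6 by auto
  then have "inverse (a ^ n) < e" using e a_ge_6 by (simp add: field_simps)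
  then show ?thesis unfolding rad_eq by blast
qed

lemma Xs_0: "Xs 0 = {x0}" and x0_in_X: "x0 \<in> X"
  and maximal_separated_Xs: "maximal_separated (rad n) (Xs n) X"
  and par_in_Xs: "x \<in> Xs (Suc n) \<Longrightarrow> par x (Suc n) \<in> Xs n"
  and dist_par_le: "x \<in> Xs (Suc n) \<Longrightarrow> z \<in> Xs n \<Longrightarrow> dist x (par x (Suc n)) \<le> dist x z"
  using filling unfolding hyperbolic_filling_def rad_def by auto

lemma Xs_subset: "Xs n \<subseteq> X"
  using maximal_separated_Xs unfolding maximal_separated_def by auto

lemma separated_Xs: "separated (rad n) (Xs n)"
  using maximal_separated_Xs unfolding maximal_separated_def by auto

lemma Xs_covers:
  assumes "p \<in> X"
  obtains z where "z \<in> Xs n" "dist p z < rad n"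
proof (cases "p \<in> Xs n")
  case True
  then show ?thesis using that[of p] rad_pos[of n] by simp
next
  case False
  then have "\<not> separated (rad n) (insert p (Xs n))"
    using maximal_separated_Xs[of n] assms unfolding maximal_separated_def by blast
  then obtain u v where uv: "u \<in> insert p (Xs n)" "v \<in> insert p (Xs n)" "u \<noteq> v" "dist u v < rad n"
    unfolding separated_def by force
  have "u = p \<or> v = p"
  proof (rule ccontr)
    assume "\<not> (u = p \<or> v = p)"
    then have "u \<in> Xs n" "v \<in> Xs n" using uv(1,2) by auto
    then show False using separated_Xs[of n] uv(3,4) unfolding separated_def by fastforce
  qed
  then show ?thesis
  proof
    assume "u = p"
    then show ?thesis using uv(2-4) by (intro that[of v]) auto
  next
    assume "v = p"
    then show ?thesis using uv(1,3,4) by (intro that[of u]) (auto simp: dist_commute)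
  qed
qed

lemma dist_par_less:
  assumes "x \<in> Xs (Suc n)"
  shows "dist x (par x (Suc n)) < rad n"
proof -
  obtain z where "z \<in> Xs n" "dist x z < rad n"
    using Xs_covers[of x n] assms Xs_subset by blast
  then show ?thesis using dist_par_le[OF assms] by fastforce
qed

text \<open>Compactness is used only here: a separated subset of a compact set is finite.\<close>
lemma finite_Xs: "finite (Xs n)"
proof (rule ccontr)
  assume "infinite (Xs n)"
  then obtain p where "p islimpt (Xs n)"
    using compact_X Xs_subset unfolding compact_eq_Bolzano_Weierstrass by blast
  then obtain y1 where y1: "y1 \<in> Xs n" "y1 \<noteq> p" "dist y1 p < rad n / 2"
    using rad_pos[of n] unfolding islimpt_approachable by (metis half_gt_zero)
  then have "0 < dist y1 p" by simp
  then obtain y2 where y2: "y2 \<in> Xs n" "y2 \<noteq> p" "dist y2 p < dist y1 p"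
    using \<open>p islimpt (Xs n)\<close> unfolding islimpt_approachable by blast
  have "dist y1 y2 < rad n"
    using y1 y2 dist_triangle[of y1 y2 p] by (simp add: dist_commute)
  moreover have "y1 \<noteq> y2" using y2 by auto
  ultimately show False using separated_Xs[of n] y1 y2 unfolding separated_def by force
qed

lemma vertices_iff [simp]: "(x, n) \<in> V \<longleftrightarrow> x \<in> Xs n"
  by (simp add: vertices_def)

lemma level_iff: "p \<in> level Xs l \<longleftrightarrow> p \<in> V \<and> snd p = l"
  by (cases p) (simp add: level_def)

lemma fst_in_Xs: "p \<in> V \<Longrightarrow> fst p \<in> Xs (snd p)"
  by (cases p) simp

lemma fst_in_X: "p \<in> V \<Longrightarrow> fst p \<in> X"
  using Xs_subset[of "snd p"] fst_in_Xs[of p] by blast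

lemma snd_parent [simp]: "snd (parent v) = snd v - 1"
  by (simp add: parent_def)

lemma parent_in_V: "v \<in> V \<Longrightarrow> snd v = Suc l \<Longrightarrow> parent v \<in> V"
  using par_in_Xs[of "fst v" l] fst_in_Xs[of v] by (simp add: parent_def)

lemma dist_parent: "v \<in> V \<Longrightarrow> snd v = Suc l \<Longrightarrow> dist (fst v) (fst (parent v)) < rad l"
  using dist_par_less[of "fst v" l] fst_in_Xs[of v] by (simp add: parent_def)

lemma dist_great_grandparent:
  assumes "h \<in> V" "snd h = Suc (Suc (Suc n))"
  shows "dist (fst h) (fst (parent (parent (parent h)))) < 3 / 2 * rad n"
proof -
  have h1: "parent h \<in> V" "snd (parent h) = Suc (Suc n)"
    using parent_in_V[OF assms] assms(2) by simp_all
  have h2: "parent (parent h) \<in> V" "snd (parent (parent h)) = Suc n"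
    using parent_in_V[OF h1] h1(2) by simp_all
  have "dist (fst h) (fst (parent h)) < rad (Suc (Suc n))" by (rule dist_parent[OF assms])
  moreover have "dist (fst (parent h)) (fst (parent (parent h))) < rad (Suc n)"
    by (rule dist_parent[OF h1])
  moreover have "dist (fst (parent (parent h))) (fst (parent (parent (parent h)))) < rad n"
    by (rule dist_parent[OF h2])
  moreover have "rad (Suc (Suc n)) \<le> rad n / 6" "rad (Suc n) \<le> rad n / 6"
    using rad_Suc_le[of n] rad_Suc_le[of "Suc n"] rad_pos[of n] by simp_all
  ultimately show ?thesis
    using dist_triangle[of "fst h" "fst (parent (parent (parent h)))" "fst (parent h)"]
      dist_triangle[of "fst (parent h)" "fst (parent (parent (parent h)))"
        "fst (parent (parent h))"]
      rad_pos[of n] by linarith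
qed

lemma is_parent_iff: "is_parent Xs par u w \<longleftrightarrow> w \<in> V \<and> 1 \<le> snd w \<and> u = parent w"
  by (simp add: is_parent_def parent_def)

lemma is_parent_snd:
  assumes "is_parent Xs par u w"
  shows "snd w = Suc (snd u)"
proof -
  have "1 \<le> snd w" "u = parent w" using assms by (simp_all add: is_parent_iff)
  then show ?thesis by simp
qed

lemma hedge_imp_edge: "hedge u w \<Longrightarrow> edge u w"
  by (simp add: adj_def)

lemma hedgeD: "hedge u w \<Longrightarrow> u \<in> V \<and> w \<in> V \<and> snd u = snd w \<and> u \<noteq> w"
  by (simp add: horiz_adj_def)

lemma hedge_sym: "hedge u w \<Longrightarrow> hedge w u"
  unfolding horiz_adj_def by (auto simp: Int_commute)

lemma edge_sym: "edge u w \<Longrightarrow> edge w u"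
  unfolding adj_def using hedge_sym by blast

lemma edge_snd_cases: "edge u w \<Longrightarrow> snd u = snd w \<or> snd w = Suc (snd u) \<or> snd u = Suc (snd w)"
  unfolding adj_def using is_parent_snd[of u w] is_parent_snd[of w u] hedgeD[of u w] by blast

lemma edge_same_level: "edge u w \<Longrightarrow> snd u = snd w \<Longrightarrow> hedge u w"
  unfolding adj_def using is_parent_snd[of u w] is_parent_snd[of w u] by auto

lemma edge_parent:
  assumes "edge u w" "snd w = Suc (snd u)"
  shows "u = parent w"
proof -
  have "is_parent Xs par u w"
    using assms is_parent_snd[of w u] hedgeD[of u w] unfolding adj_def by auto
  then show ?thesis by (simp add: is_parent_iff)
qed

lemma dist_hedge:
  assumes "hedge u w" "snd u = Suc l"
  shows "dist (fst u) (fst w) < 2 * rad l"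
proof -
  obtain p where "dist (fst u) p < lam * rad (Suc l)" "dist (fst w) p < lam * rad (Suc l)"
    using assms unfolding horiz_adj_def Xball_def rad_def[symmetric] by auto
  then show ?thesis
    using dist_triangle2[of "fst u" "fst w" p] lam_rad_Suc_le[of l] by linarith
qed

lemma eq_or_hedge_if_close:
  assumes "v \<in> V" "w \<in> V" "snd v = snd w" "p \<in> X"
    and "dist (fst v) p < lam * rad (snd v)" "dist (fst w) p < lam * rad (snd v)"
  shows "v = w \<or> hedge v w"
proof -
  have "p \<in> Xball X (fst v) (lam * rad (snd v)) \<inter> Xball X (fst w) (lam * rad (snd w))"
    using assms by (simp add: Xball_def rad_def dist_commute)
  then show ?thesis using assms(1-3) unfolding horiz_adj_def rad_def[symmetric] by blast
qed

lemma walk_iff_is_path: "walk \<gamma> \<longleftrightarrow> is_path X a lam Xs par \<gamma>"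
  by (simp add: walk_def is_path_def successively_conv_nth)

lemma walk_append_iff:
  "xs \<noteq> [] \<Longrightarrow> ys \<noteq> [] \<Longrightarrow> walk (xs @ ys) \<longleftrightarrow> walk xs \<and> walk ys \<and> edge (last xs) (hd ys)"
  unfolding walk_def successively_append_iff by auto

lemma walk_Cons: "walk (v # \<gamma>) \<longleftrightarrow> v \<in> V \<and> (\<gamma> = [] \<or> edge v (hd \<gamma>) \<and> walk \<gamma>)"
  unfolding walk_def successively_Cons by auto

lemma walk_at_level_imp_hwalk:
  assumes "walk \<gamma>" "\<forall>v\<in>set \<gamma>. snd v = l"
  shows "hwalk l \<gamma>"
proof -
  have "successively edge \<gamma>" using assms(1) by (simp add: walk_def)
  then have "successively hedge \<gamma>"
    by (rule successively_mono) (metis assms(2) edge_same_level)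
  then show ?thesis using assms unfolding walk_def hwalk_def subset_iff level_iff by blast
qed

lemma hwalk_vertex: "hwalk l \<gamma> \<Longrightarrow> p \<in> set \<gamma> \<Longrightarrow> p \<in> V \<and> snd p = l"
  unfolding hwalk_def using level_iff by blast

lemma hwalk_append_Cons:
  "hwalk l (xs @ y # ys) \<Longrightarrow> hwalk l (xs @ [y]) \<and> hwalk l (y # ys)"
  unfolding hwalk_def successively_append_iff by auto

lemma hwalk_imp_walk: "hwalk l \<gamma> \<Longrightarrow> walk \<gamma>"
  unfolding walk_def hwalk_def subset_iff level_iff
  by (auto elim!: successively_mono intro: hedge_imp_edge)

lemma c_level_spec:
  assumes "diameter X < 2" "x \<in> X" "y \<in> X" "x \<noteq> y"
  shows "\<exists>z\<in>Xs (c_level X a Xs x y). {x, y} \<subseteq> Xball X z (2 * rad (c_level X a Xs x y))"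
    and "rad (Suc (c_level X a Xs x y)) < dist x y"
proof -
  let ?n = "c_level X a Xs x y"
  define P where "P k \<longleftrightarrow> (\<exists>z\<in>Xs k. {x, y} \<subseteq> Xball X z (2 * rad k))" for k
  have n_eq: "?n = Greatest P" unfolding c_level_def P_def rad_def ..
  have "P 0"
  proof -
    have "dist x0 x \<le> diameter X" "dist x0 y \<le> diameter X"
      using diameter_bounded_bound[OF compact_imp_bounded[OF compact_X]] x0_in_X assms(2,3) by auto
    then show ?thesis using assms Xs_0 by (simp add: P_def Xball_def rad_def)
  qed
  obtain B where B: "rad B < dist x y / 4" using ex_rad_less[of "dist x y / 4"] assms(4) by auto
  have bound: "k \<le> B" if Pk: "P k" for k
  proof (rule ccontr)
    assume "\<not> k \<le> B"
    then have "rad k \<le> rad B" by (intro rad_antimono) simp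
    moreover obtain z where "dist z x < 2 * rad k" "dist z y < 2 * rad k"
      using Pk by (auto simp: P_def Xball_def)
    ultimately show False using dist_triangle3[of x y z] B by linarith
  qed
  show "P ?n" unfolding n_eq using GreatestI_nat[of P 0 B] \<open>P 0\<close> bound by blast
  have "\<not> P (Suc ?n)" using Greatest_le_nat[of P _ B] bound unfolding n_eq by fastforce
  obtain z where z: "z \<in> Xs (Suc ?n)" "dist x z < rad (Suc ?n)"
    using Xs_covers[OF assms(2)] by blast
  then have "dist z x < 2 * rad (Suc ?n)" using rad_pos[of "Suc ?n"] by (simp add: dist_commute)
  then have "\<not> dist z y < 2 * rad (Suc ?n)"
    using \<open>\<not> P (Suc ?n)\<close> z(1) assms(2,3) by (auto simp: P_def Xball_def)
  then show "rad (Suc ?n) < dist x y"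
    using z(2) dist_triangle[of z y x] by (simp add: dist_commute)
qed

lemma c_set_iff:
  "c \<in> c_set X a Xs x y \<longleftrightarrow>
    c \<in> V \<and> snd c = c_level X a Xs x y \<and> {x, y} \<subseteq> Xball X (fst c) (2 * rad (snd c))"
  by (cases c) (auto simp: c_set_def Let_def rad_def)

lemma pi_c_attained:
  assumes "diameter X < 2" "x \<in> X" "y \<in> X" "x \<noteq> y"
  obtains c where "c \<in> c_set X a Xs x y" "pi_c \<rho> par X a Xs x y = piw \<rho> par c"
proof -
  let ?n = "c_level X a Xs x y"
  have "c_set X a Xs x y \<subseteq> (\<lambda>z. (z, ?n)) ` Xs ?n"
    by (auto simp: c_set_iff image_iff intro: prod_eqI dest: fst_in_Xs)
  then have "finite (c_set X a Xs x y)" using finite_Xs finite_surj by blast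
  moreover obtain z where "z \<in> Xs ?n" "{x, y} \<subseteq> Xball X z (2 * rad ?n)"
    using c_level_spec(1)[OF assms] by blast
  then have "(z, ?n) \<in> c_set X a Xs x y" by (simp add: c_set_iff)
  then have "c_set X a Xs x y \<noteq> {}" by blast
  ultimately have "pi_c \<rho> par X a Xs x y \<in> piw \<rho> par ` c_set X a Xs x y"
    unfolding pi_c_def by (intro Max_in) auto
  then show ?thesis using that by auto
qed

end

section \<open>Weights and edge lengths\<close>

locale weighted_filling = hyp_filling +
  fixes \<rho> :: "'a \<times> nat \<Rightarrow> real" and \<eta>m K0 :: real
  assumes eta_pos: "0 < \<eta>m"
    and rho_ge_eta: "\<forall>v\<in>vertices Xs. \<eta>m \<le> \<rho> v"
    and K0_ge_1: "1 \<le> K0"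
    and pi_hedge_le: "\<forall>u w. horiz_adj X a lam Xs u w \<longrightarrow> piw \<rho> par u \<le> K0 * piw \<rho> par w"
    and L_h_Gamma_ge_1: "\<forall>k. \<forall>w\<in>level Xs k. \<forall>\<gamma>\<in>Gamma X a lam Xs k w. 1 \<le> L_h \<rho> X a lam Xs par \<gamma>"
begin

abbreviation N where "N \<equiv> near_same_level X a lam Xs par"
abbreviation pw where "pw \<equiv> piw \<rho> par"
abbreviation pw_star where "pw_star \<equiv> star_of (piw \<rho> par) X a lam Xs par"
abbreviation rho_star where "rho_star \<equiv> star_of \<rho> X a lam Xs par"
abbreviation elen where "elen \<equiv> edge_len \<rho> K0 \<eta>m X a lam Xs par"
abbreviation rho_min where "rho_min \<equiv> \<lambda>p q. min (rho_star p) (rho_star q)"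

definition len :: "('a \<times> nat) list \<Rightarrow> real" where
  "len = chain_sum elen"

lemma path_len_eq_len: "path_len \<rho> K0 \<eta>m X a lam Xs par \<gamma> = len \<gamma>"
  unfolding path_len_def len_def sum_nth_eq_chain_sum ..

lemma L_h_eq_chain_sum: "L_h \<rho> X a lam Xs par \<gamma> = chain_sum rho_min \<gamma>"
  using sum_nth_eq_chain_sum[of rho_min \<gamma>] by (simp add: L_h_def)

lemma near_same_level_iff: "q \<in> N p \<longleftrightarrow> q \<in> V \<and> snd q = snd p \<and> (q = p \<or> hedge p q)"
  unfolding near_same_level_def mem_Collect_eq
  using edge_same_level[of p q] hedge_imp_edge[of p q] by auto

lemma finite_near_same_level: "finite (N p)"
proof -
  have "N p \<subseteq> (\<lambda>x. (x, snd p)) ` Xs (snd p)"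
    by (auto simp: near_same_level_iff image_iff dest: fst_in_Xs intro: prod_eqI)
  then show ?thesis using finite_Xs finite_surj by blast
qed

lemma star_of_le: "q \<in> N p \<Longrightarrow> star_of f X a lam Xs par p \<le> f q"
  unfolding star_of_def using finite_near_same_level by (intro Min_le) auto

lemma star_of_le_self: "p \<in> V \<Longrightarrow> star_of f X a lam Xs par p \<le> f p"
  by (rule star_of_le) (simp add: near_same_level_iff)

lemma le_star_of:
  assumes "p \<in> V" "\<And>q. q \<in> N p \<Longrightarrow> c \<le> f q"
  shows "c \<le> star_of f X a lam Xs par p"
proof -
  have "p \<in> N p" using assms(1) by (simp add: near_same_level_iff)
  then show ?thesis
    unfolding star_of_def using finite_near_same_level assms(2) by (subst Min_ge_iff) auto
qed

lemma pw_parent: "v \<in> V \<Longrightarrow> snd v = Suc l \<Longrightarrow> pw v = \<rho> v * pw (parent v)"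
  by (cases v) (simp add: parent_def)

lemma rho_pos: "v \<in> V \<Longrightarrow> 0 < \<rho> v"
  using rho_ge_eta eta_pos by fastforce

lemma pw_pos: "v \<in> V \<Longrightarrow> 0 < pw v"
proof (induction "snd v" arbitrary: v)
  case 0
  then show ?case using rho_pos by (cases v) simp
next
  case (Suc l)
  then have "parent v \<in> V" "snd (parent v) = l" using parent_in_V[of v l] by simp_all
  then have "0 < pw (parent v)" using Suc.hyps(1) by simp
  then show ?case using pw_parent[of v l] rho_pos[of v] Suc.prems Suc.hyps(2) by simp
qed

lemma pw_star_nonneg: "p \<in> V \<Longrightarrow> 0 \<le> pw_star p"
  by (rule le_star_of) (auto simp: near_same_level_iff less_imp_le[OF pw_pos])

lemma rho_star_nonneg: "p \<in> V \<Longrightarrow> 0 \<le> rho_star p"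
  by (rule le_star_of) (auto simp: near_same_level_iff less_imp_le[OF rho_pos])

lemma pw_le_K0_mult_pw:
  assumes "w \<in> V" "v = w \<or> hedge v w"
  shows "pw v \<le> K0 * pw w"
  using assms(2)
proof
  assume "v = w"
  then show ?thesis using pw_pos[OF assms(1)] K0_ge_1 by (simp add: mult_le_cancel_right1)
next
  assume "hedge v w"
  then show ?thesis using pi_hedge_le by blast
qed

lemma pw_le_K0_mult_pw_star:
  assumes "p \<in> V"
  shows "pw p \<le> K0 * pw_star p"
proof -
  have "pw p / K0 \<le> pw_star p"
  proof (rule le_star_of[OF assms])
    fix q assume "q \<in> N p"
    then have "pw p \<le> K0 * pw q" by (intro pw_le_K0_mult_pw) (auto simp: near_same_level_iff)
    then show "pw p / K0 \<le> pw q" using K0_ge_1 by (simp add: divide_le_eq mult.commute)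
  qed
  then show ?thesis using K0_ge_1 by (simp add: divide_le_eq mult.commute)
qed

lemma eta_sq_mult_pw_le:
  assumes "v \<in> V" "snd v = Suc (Suc l)"
  shows "\<eta>m\<^sup>2 * pw (parent (parent v)) \<le> pw v"
proof -
  have u: "parent v \<in> V" "snd (parent v) = Suc l" using parent_in_V[OF assms] assms(2) by simp_all
  have "0 < pw (parent (parent v))" using pw_pos parent_in_V[OF u] by simp
  then have "\<eta>m * (\<eta>m * pw (parent (parent v))) \<le> \<rho> v * (\<rho> (parent v) * pw (parent (parent v)))"
    using rho_ge_eta assms(1) u(1) eta_pos by (intro mult_mono) auto
  then show ?thesis
    using pw_parent[OF assms(1,2)] pw_parent[OF u] by (simp add: power2_eq_square mult.assoc)
qed

lemma elen_same_level: "snd u = snd w \<Longrightarrow> elen u w = min (pw_star u) (pw_star w)"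
  by (simp add: edge_len_def Let_def)

lemma elen_parent:
  assumes "snd v = Suc l"
  shows "elen v (parent v) = K0 / \<eta>m * pw_star v"
proof -
  have "snd (parent v) \<noteq> Suc (snd v)" by simp
  then have "\<not> is_parent Xs par v (parent v)" using is_parent_snd[of v "parent v"] by blast
  then show ?thesis using assms by (simp add: edge_len_def Let_def)
qed

lemma elen_nonneg: "u \<in> V \<Longrightarrow> w \<in> V \<Longrightarrow> 0 \<le> elen u w"
  using pw_star_nonneg[of u] pw_star_nonneg[of w] eta_pos K0_ge_1
  unfolding edge_len_def Let_def by auto

lemma pw_parent_le_elen:
  assumes "v \<in> V" "snd v = Suc l"
  shows "pw (parent v) \<le> elen v (parent v)"
proof -
  have "\<eta>m * pw (parent v) \<le> \<rho> v * pw (parent v)"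
    using rho_ge_eta assms pw_pos[OF parent_in_V[OF assms]] by (intro mult_right_mono) auto
  also have "\<dots> \<le> K0 * pw_star v"
    using pw_parent[OF assms] pw_le_K0_mult_pw_star[OF assms(1)] by simp
  finally have "pw (parent v) \<le> K0 * pw_star v / \<eta>m"
    using eta_pos by (simp add: le_divide_eq mult.commute)
  then show ?thesis using elen_parent[OF assms(2)] by simp
qed

lemma len_nonneg: "set \<gamma> \<subseteq> V \<Longrightarrow> 0 \<le> len \<gamma>"
  unfolding len_def by (rule chain_sum_nonneg) (auto intro: elen_nonneg)

lemma len_hwalk: "hwalk l \<gamma> \<Longrightarrow> len \<gamma> = chain_sum (\<lambda>p q. min (pw_star p) (pw_star q)) \<gamma>"
  unfolding len_def by (rule chain_sum_cong) (simp add: hwalk_vertex elen_same_level)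

lemma len_Cons: "\<gamma> \<noteq> [] \<Longrightarrow> len (v # \<gamma>) = elen v (hd \<gamma>) + len \<gamma>"
  by (cases \<gamma>) (simp_all add: len_def)

lemma len_append_Cons: "len (xs @ y # ys) = len (xs @ [y]) + len (y # ys)"
  unfolding len_def by (rule chain_sum_append_Cons)

lemma len_append:
  "xs \<noteq> [] \<Longrightarrow> ys \<noteq> [] \<Longrightarrow> len (xs @ ys) = len xs + elen (last xs) (hd ys) + len ys"
  unfolding len_def by (rule chain_sum_append)

lemma elen_last_le_len:
  assumes "xs \<noteq> []" "set (xs @ [y]) \<subseteq> V"
  shows "elen (last xs) y \<le> len (xs @ [y])"
  using chain_sum_snoc[OF assms(1), of elen y] len_nonneg[of xs] assms(2) by (simp add: len_def)

lemma len_prefix_le: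
  assumes "set (xs @ y # ys) \<subseteq> V"
  shows "len (xs @ [y]) \<le> len (xs @ y # ys)"
  using len_append_Cons[of xs y ys] len_nonneg[of "y # ys"] assms by simp

section \<open>Horizontal walks and hypothesis (H3')\<close>

lemma pw_star_mult_rho_star_le:
  assumes W: "W \<in> V" "snd W = l" and p: "p \<in> V" "snd p = Suc l"
    and dist_Wp: "dist (fst W) (fst p) < 4 * rad l"
  shows "pw_star W * rho_star p \<le> pw_star p"
proof (rule le_star_of[OF p(1)])
  fix q assume q: "q \<in> N p"
  then have qV: "q \<in> V" and ql: "snd q = Suc l" and "q = p \<or> hedge p q"
    using p(2) by (auto simp: near_same_level_iff)
  then have "dist (fst p) (fst q) < 2 * rad l"
    using dist_hedge[of p q l] p(2) rad_pos[of l] by auto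
  then have "dist (fst W) (fst q) < lam * rad l"
    using dist_Wp dist_triangle[of "fst W" "fst q" "fst p"] mult_rad_le_lam_rad[of 6 l] by linarith
  moreover have "dist (fst (parent q)) (fst q) < lam * rad l"
    using dist_parent[OF qV ql] mult_rad_le_lam_rad[of 1 l] by (simp add: dist_commute)
  ultimately have "W = parent q \<or> hedge W (parent q)"
    using eq_or_hedge_if_close[OF W(1) parent_in_V[OF qV ql] _ fst_in_X[OF qV]] W(2) ql by simp
  then have "parent q \<in> N W"
    using W parent_in_V[OF qV ql] ql by (auto simp: near_same_level_iff)
  then have "pw_star W \<le> pw (parent q)" by (rule star_of_le)
  moreover have "rho_star p \<le> \<rho> q" using q by (rule star_of_le)
  ultimately have "pw_star W * rho_star p \<le> pw (parent q) * \<rho> q"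
    using pw_star_nonneg[OF W(1)] rho_star_nonneg[OF p(1)] pw_pos[OF parent_in_V[OF qV ql]]
    by (intro mult_mono) auto
  also have "\<dots> = pw q" using pw_parent[OF qV ql] by simp
  finally show "pw_star W * rho_star p \<le> pw q" .
qed

lemma pw_star_mult_L_h_le_len:
  assumes W: "W \<in> V" "snd W = l" and seg: "hwalk (Suc l) seg"
    and near: "\<forall>p\<in>set seg. dist (fst W) (fst p) < 4 * rad l"
  shows "pw_star W * chain_sum rho_min seg \<le> len seg"
proof -
  have "pw_star W * chain_sum rho_min seg = chain_sum (\<lambda>p q. pw_star W * rho_min p q) seg"
    by (simp add: chain_sum_const_mult)
  also have "\<dots> \<le> chain_sum (\<lambda>p q. min (pw_star p) (pw_star q)) seg"
  proof (rule chain_sum_mono)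
    fix p q assume "p \<in> set seg" "q \<in> set seg"
    then have "pw_star W * rho_star p \<le> pw_star p" "pw_star W * rho_star q \<le> pw_star q"
      using pw_star_mult_rho_star_le[OF W] hwalk_vertex[OF seg] near by auto
    moreover have "pw_star W * rho_min p q = min (pw_star W * rho_star p) (pw_star W * rho_star q)"
      using pw_star_nonneg[OF W(1)] by (simp add: min_mult_distrib_left)
    ultimately show "pw_star W * rho_min p q \<le> min (pw_star p) (pw_star q)" by linarith
  qed
  also have "\<dots> = len seg" using len_hwalk[OF seg] by simp
  finally show ?thesis .
qed

lemma one_le_L_h_exit:
  assumes W: "W \<in> V" "snd W = l" and seg: "hwalk (Suc l) seg"
    and "dist (fst W) (fst (hd seg)) < rad l" "2 * rad l \<le> dist (fst W) (fst (last seg))"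
  shows "1 \<le> chain_sum rho_min seg"
proof -
  have "seg \<in> Gamma X a lam Xs l W"
    using seg assms(4,5) fst_in_X[of "hd seg"] hwalk_vertex[OF seg, of "hd seg"] W(2)
    unfolding Gamma_def is_horiz_path_def hwalk_def Bv_def Xball_def rad_def[symmetric]
    by (auto simp: level_iff successively_conv_nth)
  moreover have "W \<in> level Xs l" using W by (simp add: level_iff)
  ultimately show ?thesis using L_h_Gamma_ge_1 L_h_eq_chain_sum by metis
qed

lemma dist_hedge_step:
  assumes "hwalk (Suc l) (pre @ [t])" "pre \<noteq> []" "dist (fst W) (fst (last pre)) < 2 * rad l"
  shows "dist (fst W) (fst t) < 4 * rad l"
proof -
  have "hedge (last pre) t" "snd (last pre) = Suc l"
    using assms(1,2) hwalk_vertex[OF assms(1), of "last pre"]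
    unfolding hwalk_def successively_append_iff by auto
  then show ?thesis
    using dist_hedge[of "last pre" t l] assms(3) dist_triangle[of "fst W" "fst t" "fst (last pre)"]
    by linarith
qed

text \<open>This is where (H3') enters: it bounds the rho-length of the walk from below by 1, and
  near W every pi* is at least pi*(W) times the corresponding rho*.\<close>
lemma pw_star_le_len_exit:
  assumes W: "W \<in> V" "snd W = l" and seg: "hwalk (Suc l) (pre @ [t])" "pre \<noteq> []"
    and start: "dist (fst W) (fst (hd pre)) < rad l"
    and inside: "\<forall>p\<in>set pre. dist (fst W) (fst p) < 2 * rad l"
    and exit: "2 * rad l \<le> dist (fst W) (fst t)"
  shows "pw_star W \<le> len (pre @ [t])"
proof -
  have one: "1 \<le> chain_sum rho_min (pre @ [t])"
    by (rule one_le_L_h_exit[OF W seg(1)]) (use seg(2) start exit in auto)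
  have "dist (fst W) (fst (last pre)) < 2 * rad l" using inside seg(2) by simp
  then have "dist (fst W) (fst t) < 4 * rad l" by (rule dist_hedge_step[OF seg])
  then have "\<forall>p\<in>set (pre @ [t]). dist (fst W) (fst p) < 4 * rad l"
    using inside rad_pos[of l] by force
  then have "pw_star W * chain_sum rho_min (pre @ [t]) \<le> len (pre @ [t])"
    by (rule pw_star_mult_L_h_le_len[OF W seg(1)])
  moreover have "pw_star W * 1 \<le> pw_star W * chain_sum rho_min (pre @ [t])"
    using one pw_star_nonneg[OF W(1)] by (rule mult_left_mono)
  ultimately show ?thesis by simp
qed

lemma hwalk_Cons_parent:
  assumes R: "hwalk (Suc l) (pre @ t # rest)" "pre \<noteq> []" and W_eq: "W = parent (hd pre)"
    and inside: "\<forall>v\<in>set pre. dist (fst W) (fst v) < 2 * rad l"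
    and exit: "2 * rad l \<le> dist (fst W) (fst t)"
    and Q: "hwalk l Q" "hd Q = parent t" "len Q \<le> len (t # rest)"
  shows "hwalk l (W # Q) \<and> len (W # Q) \<le> len (pre @ t # rest)"
proof -
  have walks: "hwalk (Suc l) (pre @ [t])" "hwalk (Suc l) (t # rest)"
    using hwalk_append_Cons[OF R(1)] by simp_all
  have "hd pre \<in> V" "snd (hd pre) = Suc l"
    using hwalk_vertex[OF walks(1), of "hd pre"] R(2) by simp_all
  then have W: "W \<in> V" "snd W = l" "dist (fst W) (fst (hd pre)) < rad l"
    unfolding W_eq using parent_in_V dist_parent by (simp_all add: dist_commute)
  have t: "t \<in> V" "snd t = Suc l" using hwalk_vertex[OF walks(2)] by auto
  have "dist (fst W) (fst (last pre)) < 2 * rad l" using inside R(2) by simp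
  then have "dist (fst W) (fst t) < 4 * rad l" by (rule dist_hedge_step[OF walks(1) R(2)])
  moreover have "dist (fst (parent t)) (fst t) < rad l"
    using dist_parent[OF t] by (simp add: dist_commute)
  ultimately have "W = parent t \<or> hedge W (parent t)"
    using eq_or_hedge_if_close[OF W(1) parent_in_V[OF t] _ fst_in_X[OF t(1)]] W(2) t(2)
      mult_rad_le_lam_rad[of 4 l] mult_rad_le_lam_rad[of 1 l] by simp
  moreover have "W \<noteq> parent t"
  proof
    assume "W = parent t"
    then show False using exit dist_parent[OF t] rad_pos[of l] by (simp add: dist_commute)
  qed
  ultimately have "hedge W (hd Q)" using Q(2) by simp
  then have "hwalk l (W # Q)"
    using Q(1) W(1,2) unfolding hwalk_def by (simp add: level_iff successively_Cons)
  moreover have "len (W # Q) = min (pw_star W) (pw_star (hd Q)) + len Q"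
    using Q(1) W(2) hwalk_vertex[OF Q(1), of "hd Q"]
    by (simp add: hwalk_def len_Cons elen_same_level)
  moreover have "pw_star W \<le> len (pre @ [t])"
    using pw_star_le_len_exit[OF W(1,2) walks(1) R(2) W(3) inside exit] .
  ultimately show ?thesis using Q(3) len_append_Cons[of pre t rest] by simp
qed

text \<open>Projection of a horizontal walk to the parent level: a new horizontal edge is added each
  time the walk leaves the ball of radius 2 rad l around the current parent.\<close>
lemma ex_parent_hwalk:
  assumes "hwalk (Suc l) R"
  shows "\<exists>Q. hwalk l Q \<and> hd Q = parent (hd R) \<and> dist (fst (last Q)) (fst (last R)) < 2 * rad l
           \<and> len Q \<le> len R"
  using assms
proof (induction "length R" arbitrary: R rule: less_induct)
  case less
  have "R \<noteq> []" using less.prems by (simp add: hwalk_def)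
  then have hd: "hd R \<in> V" "snd (hd R) = Suc l" using hwalk_vertex[OF less.prems] by auto
  define W where "W = parent (hd R)"
  have W: "W \<in> V" "snd W = l" "dist (fst W) (fst (hd R)) < rad l"
    unfolding W_def
    using parent_in_V[OF hd] dist_parent[OF hd] hd(2) by (simp_all add: dist_commute)
  show ?case
  proof (cases "\<forall>v\<in>set R. dist (fst W) (fst v) < 2 * rad l")
    case True
    have "set R \<subseteq> V" using hwalk_vertex[OF less.prems] by blast
    then have "len [W] \<le> len R" using len_nonneg by (simp add: len_def)
    moreover have "hwalk l [W]" using W(1,2) by (simp add: hwalk_def level_iff)
    moreover have "dist (fst (last [W])) (fst (last R)) < 2 * rad l" using True \<open>R \<noteq> []\<close> by simp
    ultimately show ?thesis unfolding W_def by force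
  next
    case False
    then have "\<exists>v\<in>set R. \<not> dist (fst W) (fst v) < 2 * rad l" by blast
    then obtain pre t rest where R: "R = pre @ t # rest"
      and "\<not> dist (fst W) (fst t) < 2 * rad l"
      and "\<forall>v\<in>set pre. \<not> \<not> dist (fst W) (fst v) < 2 * rad l"
      by (rule split_list_first_propE)
    then have exit: "2 * rad l \<le> dist (fst W) (fst t)"
      and inside: "\<forall>v\<in>set pre. dist (fst W) (fst v) < 2 * rad l" by simp_all
    have "pre \<noteq> []" using R exit W(3) rad_pos[of l] by auto
    then have "hd R = hd pre" using R by simp
    obtain Q' where Q': "hwalk l Q'" "hd Q' = parent t"
      "dist (fst (last Q')) (fst (last R)) < 2 * rad l" "len Q' \<le> len (t # rest)"
      using less.hyps[of "t # rest"] hwalk_append_Cons less.prems R \<open>pre \<noteq> []\<close> by auto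
    have "hwalk l (W # Q') \<and> len (W # Q') \<le> len R"
      using hwalk_Cons_parent[of l pre t rest W Q'] less.prems R \<open>pre \<noteq> []\<close> W_def \<open>hd R = hd pre\<close>
        inside exit Q'(1,2,4) by simp
    then show ?thesis using Q'(1,3) W_def by (intro exI[of _ "W # Q'"]) (simp add: hwalk_def)
  qed
qed

section \<open>Lowering walks\<close>

lemma walk_join:
  assumes Q: "walk Q" and G: "walk G" and close: "last Q = hd G \<or> hedge (last Q) (hd G)"
  shows "\<exists>\<gamma>. walk \<gamma> \<and> hd \<gamma> = hd Q \<and> last \<gamma> = last G \<and> set \<gamma> \<subseteq> set Q \<union> set G
           \<and> len \<gamma> \<le> len Q + pw_star (hd G) + len G"
proof -
  have ne: "Q \<noteq> []" "G \<noteq> []" using Q G by (simp_all add: walk_def)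
  have "0 \<le> pw_star (hd G)" using G ne(2) by (intro pw_star_nonneg) (auto simp: walk_def)
  show ?thesis
  proof (cases "last Q = hd G")
    case True
    have G_eq: "G = last Q # tl G" using True ne(2) by simp
    have "walk (Q @ tl G)"
      using Q G ne(1) G_eq walk_Cons[of "last Q" "tl G"] walk_append_iff[of Q "tl G"]
      by (cases "tl G") auto
    moreover have "len (Q @ tl G) = len Q + len G"
    proof -
      have "Q @ tl G = butlast Q @ last Q # tl G" using ne(1) by simp
      then show ?thesis
        using len_append_Cons[of "butlast Q" "last Q" "tl G"] G_eq ne(1) by simp
    qed
    moreover have "last (Q @ tl G) = last G"
    proof (cases "tl G = []")
      case True
      then show ?thesis using G_eq by (metis append.right_neutral last_ConsL)
    next
      case False
      have "last G = last (last Q # tl G)" using G_eq by (rule arg_cong)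
      then show ?thesis using False by simp
    qed
    ultimately show ?thesis
      using ne \<open>0 \<le> pw_star (hd G)\<close> by (intro exI[of _ "Q @ tl G"]) (auto dest: list.set_sel(2))
  next
    case False
    then have "hedge (last Q) (hd G)" using close by simp
    then have "walk (Q @ G)" "elen (last Q) (hd G) \<le> pw_star (hd G)"
      using Q G ne walk_append_iff hedge_imp_edge hedgeD[of "last Q" "hd G"] elen_same_level
      by auto
    then show ?thesis using ne len_append[of Q G] by (intro exI[of _ "Q @ G"]) auto
  qed
qed

definition lift :: "nat \<Rightarrow> 'a \<times> nat \<Rightarrow> 'a \<times> nat" where
  "lift l v = (if snd v = Suc l then parent v else v)"

definition lowering :: "nat \<Rightarrow> ('a \<times> nat) list \<Rightarrow> ('a \<times> nat) list \<Rightarrow> bool" where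
  "lowering l \<gamma> \<gamma>' \<longleftrightarrow> walk \<gamma>' \<and> (\<forall>v\<in>set \<gamma>'. snd v \<le> l) \<and> hd \<gamma>' = lift l (hd \<gamma>) \<and>
     (if snd (last \<gamma>) = Suc l
      then snd (last \<gamma>') = l \<and> dist (fst (last \<gamma>')) (fst (last \<gamma>)) < 2 * rad l
      else last \<gamma>' = last \<gamma>) \<and>
     len \<gamma>' \<le> len \<gamma>"

lemma lowering_singleton: "s \<in> V \<Longrightarrow> snd s \<le> l \<Longrightarrow> lowering l [s] [s]"
  by (simp add: lowering_def lift_def walk_def)

lemma lowering_Cons_parent:
  assumes walk: "walk (s # \<gamma>)" and "\<gamma> \<noteq> []" and s: "snd s \<le> l" and t: "snd (hd \<gamma>) = Suc l"
    and low: "lowering l \<gamma> \<gamma>'"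
  shows "lowering l (s # \<gamma>) \<gamma>'"
proof -
  have e: "edge s (hd \<gamma>)" "s \<in> V" "walk \<gamma>"
    using walk \<open>\<gamma> \<noteq> []\<close> by (simp_all add: walk_Cons)
  have "hd \<gamma> \<in> V" using e(3) \<open>\<gamma> \<noteq> []\<close> by (auto simp: walk_def)
  have "snd (hd \<gamma>) = Suc (snd s)" using edge_snd_cases[OF e(1)] s t by auto
  with e(1) have "s = parent (hd \<gamma>)" by (rule edge_parent)
  then have "hd \<gamma>' = lift l s" using low s t by (simp add: lowering_def lift_def)
  moreover have "len \<gamma>' \<le> len (s # \<gamma>)"
    using low elen_nonneg[OF e(2) \<open>hd \<gamma> \<in> V\<close>] len_Cons[OF \<open>\<gamma> \<noteq> []\<close>, of s]
    by (simp add: lowering_def)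
  ultimately show ?thesis using low \<open>\<gamma> \<noteq> []\<close> by (simp add: lowering_def)
qed

lemma lowering_Cons:
  assumes walk: "walk (s # \<gamma>)" and "\<gamma> \<noteq> []" and s: "snd s \<le> l" and t: "snd (hd \<gamma>) \<le> l"
    and low: "lowering l \<gamma> \<gamma>'"
  shows "lowering l (s # \<gamma>) (s # \<gamma>')"
proof -
  have "hd \<gamma>' = hd \<gamma>" using low t by (simp add: lowering_def lift_def)
  moreover have "\<gamma>' \<noteq> []" using low by (simp add: lowering_def walk_def)
  ultimately have "walk (s # \<gamma>')" "len (s # \<gamma>') \<le> len (s # \<gamma>)"
    using walk low \<open>\<gamma> \<noteq> []\<close> len_Cons[of \<gamma>' s] len_Cons[of \<gamma> s]
    by (auto simp: walk_Cons lowering_def)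
  then show ?thesis
    using low s \<open>\<gamma> \<noteq> []\<close> \<open>\<gamma>' \<noteq> []\<close> by (simp add: lowering_def lift_def)
qed

lemma lowering_hwalk:
  assumes "hwalk (Suc l) run"
  shows "\<exists>Q. lowering l run Q \<and> hwalk l Q"
proof -
  obtain Q where Q: "hwalk l Q" "hd Q = parent (hd run)"
    "dist (fst (last Q)) (fst (last run)) < 2 * rad l" "len Q \<le> len run"
    using ex_parent_hwalk[OF assms] by blast
  have "run \<noteq> []" "Q \<noteq> []" using assms Q(1) by (simp_all add: hwalk_def)
  then have "snd (hd run) = Suc l" "snd (last run) = Suc l" "snd (last Q) = l"
    using hwalk_vertex[OF assms] hwalk_vertex[OF Q(1)] by simp_all
  then have "lowering l run Q"
    using Q hwalk_imp_walk[OF Q(1)] hwalk_vertex[OF Q(1)] by (simp add: lowering_def lift_def)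
  then show ?thesis using Q(1) by blast
qed

text \<open>The projection of the run ends within 3 rad l of the parent R of its last vertex, so it
  can be joined to the lowering of the rest at the price of the descending edge.\<close>
lemma lowering_hwalk_append:
  assumes run: "hwalk (Suc l) run" and rest: "rest \<noteq> []" "snd (hd rest) \<noteq> Suc l"
    "\<forall>v\<in>set rest. snd v \<le> Suc l"
    and walk: "walk (run @ rest)" and low: "lowering l rest \<gamma>''"
  shows "\<exists>\<gamma>'. lowering l (run @ rest) \<gamma>'"
proof -
  obtain Q where Q: "lowering l run Q" "hwalk l Q" using lowering_hwalk[OF run] by blast
  have "run \<noteq> []" "Q \<noteq> []" using run Q(2) by (simp_all add: hwalk_def)
  define L where "L = last run"
  define R where "R = hd rest"
  have L: "L \<in> V" "snd L = Suc l" unfolding L_def using hwalk_vertex[OF run] \<open>run \<noteq> []\<close> by simp_all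
  have "edge L R" "walk rest"
    using walk walk_append_iff[OF \<open>run \<noteq> []\<close> rest(1)] unfolding L_def R_def by simp_all
  have "R \<in> set rest" unfolding R_def using rest(1) by simp
  then have "snd R \<le> l" using rest(2,3) unfolding R_def by fastforce
  then have "snd L = Suc (snd R)" using edge_snd_cases[OF \<open>edge L R\<close>] L(2) by auto
  with edge_sym[OF \<open>edge L R\<close>] have R_parent: "R = parent L" by (rule edge_parent)
  then have R: "R \<in> V" "snd R = l" using parent_in_V[OF L] L(2) by simp_all
  have "last Q \<in> V" "snd (last Q) = l" "dist (fst (last Q)) (fst L) < 2 * rad l"
    using Q L(2) hwalk_vertex[OF Q(2)] \<open>Q \<noteq> []\<close> unfolding L_def by (simp_all add: lowering_def)
  moreover have "dist (fst L) (fst R) < rad l" using dist_parent[OF L] R_parent by simp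
  ultimately have "dist (fst (last Q)) (fst R) < lam * rad l"
    using dist_triangle[of "fst (last Q)" "fst R" "fst L"] mult_rad_le_lam_rad[of 3 l] by linarith
  then have "last Q = R \<or> hedge (last Q) R"
    using eq_or_hedge_if_close[OF \<open>last Q \<in> V\<close> R(1) _ fst_in_X[OF R(1)]] R(2) \<open>snd (last Q) = l\<close>
      lam_rad_pos[of l] by simp
  moreover have "hd \<gamma>'' = R" using low R(2) unfolding R_def by (simp add: lowering_def lift_def)
  ultimately obtain \<gamma> where \<gamma>: "walk \<gamma>" "hd \<gamma> = hd Q" "last \<gamma> = last \<gamma>''"
    "set \<gamma> \<subseteq> set Q \<union> set \<gamma>''" "len \<gamma> \<le> len Q + pw_star R + len \<gamma>''"
    using walk_join[OF hwalk_imp_walk[OF Q(2)], of \<gamma>''] low by (auto simp: lowering_def)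
  have "pw_star R \<le> elen L R"
    using star_of_le_self[OF R(1), of pw] pw_parent_le_elen[OF L] R_parent by simp
  then have "len \<gamma> \<le> len (run @ rest)"
    using \<gamma>(5) Q(1) low len_append[OF \<open>run \<noteq> []\<close> rest(1)] unfolding L_def R_def
    by (simp add: lowering_def)
  then have "lowering l (run @ rest) \<gamma>"
    using \<gamma> Q(1) low \<open>run \<noteq> []\<close> rest(1) by (auto simp: lowering_def)
  then show ?thesis by blast
qed

lemma ex_lowering_Cons:
  assumes walk: "walk (s # rest)" and s: "snd s \<le> l"
    and levels: "\<forall>v\<in>set rest. snd v \<le> Suc l"
    and IH: "rest \<noteq> [] \<Longrightarrow> \<exists>\<gamma>''. lowering l rest \<gamma>''"
  shows "\<exists>\<gamma>'. lowering l (s # rest) \<gamma>'"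
proof (cases "rest = []")
  case True
  then have "lowering l (s # rest) [s]"
    using lowering_singleton[OF _ s] walk by (simp add: walk_def)
  then show ?thesis by blast
next
  case False
  then obtain \<gamma>'' where low: "lowering l rest \<gamma>''" using IH by blast
  have "snd (hd rest) \<le> Suc l" using levels False by simp
  then consider "snd (hd rest) = Suc l" | "snd (hd rest) \<le> l" by linarith
  then show ?thesis
  proof cases
    case 1
    then have "lowering l (s # rest) \<gamma>''" by (rule lowering_Cons_parent[OF walk False s _ low])
    then show ?thesis by blast
  next
    case 2
    then have "lowering l (s # rest) (s # \<gamma>'')" by (rule lowering_Cons[OF walk False s _ low])
    then show ?thesis by blast
  qed
qed

lemma ex_lowering_run:
  assumes walk: "walk \<gamma>" and levels: "\<forall>v\<in>set \<gamma>. snd v \<le> Suc l" and hd: "snd (hd \<gamma>) = Suc l"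
    and IH: "\<And>\<delta>. length \<delta> < length \<gamma> \<Longrightarrow> walk \<delta> \<Longrightarrow> \<forall>v\<in>set \<delta>. snd v \<le> Suc l \<Longrightarrow>
      \<exists>\<delta>'. lowering l \<delta> \<delta>'"
  shows "\<exists>\<gamma>'. lowering l \<gamma> \<gamma>'"
proof (cases "\<forall>v\<in>set \<gamma>. snd v = Suc l")
  case True
  then have "hwalk (Suc l) \<gamma>" by (rule walk_at_level_imp_hwalk[OF walk])
  then show ?thesis using lowering_hwalk[of l \<gamma>] by blast
next
  case False
  then have "\<exists>v\<in>set \<gamma>. snd v \<noteq> Suc l" by blast
  then obtain run r rest where split: "\<gamma> = run @ r # rest" and r: "snd r \<noteq> Suc l"
    and "\<forall>v\<in>set run. \<not> snd v \<noteq> Suc l"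
    by (rule split_list_first_propE)
  then have run_level: "\<forall>v\<in>set run. snd v = Suc l" by simp
  have "run \<noteq> []" using split r hd by (cases run) auto
  then have "walk run" "walk (r # rest)"
    using walk split walk_append_iff[of run "r # rest"] by simp_all
  moreover have "\<forall>v\<in>set (r # rest). snd v \<le> Suc l" using levels split by simp
  moreover have "length (r # rest) < length \<gamma>" using split \<open>run \<noteq> []\<close> by simp
  ultimately obtain \<gamma>'' where "lowering l (r # rest) \<gamma>''" using IH by blast
  moreover have "hwalk (Suc l) run" by (rule walk_at_level_imp_hwalk[OF \<open>walk run\<close> run_level])
  ultimately show ?thesis
    using lowering_hwalk_append[of l run "r # rest" \<gamma>''] r walk levels split by simp
qed

lemma ex_lowering:
  assumes "walk \<gamma>" "\<forall>v\<in>set \<gamma>. snd v \<le> Suc l"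
  shows "\<exists>\<gamma>'. lowering l \<gamma> \<gamma>'"
  using assms
proof (induction "length \<gamma>" arbitrary: \<gamma> rule: less_induct)
  case less
  obtain s rest where \<gamma>: "\<gamma> = s # rest" using less.prems(1) by (cases \<gamma>) (auto simp: walk_def)
  show ?case
  proof (cases "snd s = Suc l")
    case True
    then show ?thesis using ex_lowering_run[OF less.prems] less.hyps \<gamma> by simp
  next
    case False
    then have "snd s \<le> l" using less.prems(2) \<gamma> by fastforce
    moreover have "rest \<noteq> [] \<Longrightarrow> \<exists>\<gamma>''. lowering l rest \<gamma>''"
      using less.hyps[of rest] less.prems \<gamma> by (simp add: walk_Cons)
    ultimately show ?thesis using ex_lowering_Cons less.prems \<gamma> by simp
  qed
qed

section \<open>The lower bound\<close>

text \<open>The constants differ because lowering moves the first vertex to its parent, at distance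
  less than rad l, but the last one only to within 2 rad l.\<close>
definition ends_near :: "nat \<Rightarrow> 'a \<Rightarrow> 'a \<Rightarrow> ('a \<times> nat) list \<Rightarrow> bool" where
  "ends_near m x y \<gamma> \<longleftrightarrow> walk \<gamma> \<and> m \<le> snd (hd \<gamma>) \<and> m \<le> snd (last \<gamma>) \<and>
     dist x (fst (hd \<gamma>)) < 2 * rad (snd (hd \<gamma>)) \<and> dist y (fst (last \<gamma>)) < 3 * rad (snd (last \<gamma>))"

lemma ends_near_lowering:
  assumes near: "ends_near m x y \<gamma>" and "m \<le> l" and low: "lowering l \<gamma> \<gamma>'"
  shows "ends_near m x y \<gamma>'"
proof -
  have "\<gamma> \<noteq> []" using near by (simp add: ends_near_def walk_def)
  have r: "rad (Suc l) \<le> rad l / 6" "0 < rad l" by (rule rad_Suc_le, rule rad_pos)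
  have hd: "m \<le> snd (hd \<gamma>') \<and> dist x (fst (hd \<gamma>')) < 2 * rad (snd (hd \<gamma>'))"
  proof (cases "snd (hd \<gamma>) = Suc l")
    case True
    have "hd \<gamma> \<in> V" using near \<open>\<gamma> \<noteq> []\<close> by (auto simp: ends_near_def walk_def)
    have "hd \<gamma>' = parent (hd \<gamma>)" using low True by (simp add: lowering_def lift_def)
    then have "snd (hd \<gamma>') = l" "dist (fst (hd \<gamma>)) (fst (hd \<gamma>')) < rad l"
      using dist_parent[OF \<open>hd \<gamma> \<in> V\<close> True] True by simp_all
    moreover have "dist x (fst (hd \<gamma>)) < 2 * rad (Suc l)"
      using near True by (simp add: ends_near_def)
    ultimately show ?thesis
      using dist_triangle[of x "fst (hd \<gamma>')" "fst (hd \<gamma>)"] r \<open>m \<le> l\<close> by simp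
  next
    case False
    then show ?thesis using near low by (simp add: ends_near_def lowering_def lift_def)
  qed
  have last: "m \<le> snd (last \<gamma>') \<and> dist y (fst (last \<gamma>')) < 3 * rad (snd (last \<gamma>'))"
  proof (cases "snd (last \<gamma>) = Suc l")
    case True
    then have "snd (last \<gamma>') = l" "dist (fst (last \<gamma>)) (fst (last \<gamma>')) < 2 * rad l"
      using low by (simp_all add: lowering_def dist_commute)
    moreover have "dist y (fst (last \<gamma>)) < 3 * rad (Suc l)"
      using near True by (simp add: ends_near_def)
    ultimately show ?thesis
      using dist_triangle[of y "fst (last \<gamma>')" "fst (last \<gamma>)"] r \<open>m \<le> l\<close> by simp
  next
    case False
    then show ?thesis using near low by (simp add: ends_near_def lowering_def)
  qed
  show ?thesis using hd last low by (simp add: ends_near_def lowering_def)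
qed

lemma ex_lowering_to_level:
  assumes "ends_near m x y \<gamma>" "\<forall>v\<in>set \<gamma>. snd v \<le> M"
  shows "\<exists>\<gamma>'. ends_near m x y \<gamma>' \<and> (\<forall>v\<in>set \<gamma>'. snd v \<le> m) \<and> len \<gamma>' \<le> len \<gamma>"
  using assms
proof (induction M arbitrary: \<gamma>)
  case 0
  then show ?case by fastforce
next
  case (Suc M)
  show ?case
  proof (cases "Suc M \<le> m")
    case True
    then show ?thesis using Suc.prems by fastforce
  next
    case False
    obtain \<gamma>1 where low: "lowering M \<gamma> \<gamma>1"
      using ex_lowering[of \<gamma> M] Suc.prems by (auto simp: ends_near_def)
    then have "ends_near m x y \<gamma>1" "\<forall>v\<in>set \<gamma>1. snd v \<le> M"
      using ends_near_lowering[OF Suc.prems(1) _ low] False by (simp_all add: lowering_def)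
    then obtain \<gamma>2 where "ends_near m x y \<gamma>2" "\<forall>v\<in>set \<gamma>2. snd v \<le> m" "len \<gamma>2 \<le> len \<gamma>1"
      using Suc.IH by blast
    then show ?thesis using low by (intro exI[of _ \<gamma>2]) (auto simp: lowering_def)
  qed
qed

lemma ends_near_levels:
  assumes "ends_near m x y \<gamma>" "\<forall>v\<in>set \<gamma>. snd v \<le> m"
  shows "hd \<gamma> \<in> V" "snd (hd \<gamma>) = m" "snd (last \<gamma>) = m"
proof -
  have "\<gamma> \<noteq> []" "set \<gamma> \<subseteq> V" using assms(1) by (simp_all add: ends_near_def walk_def)
  then have "hd \<gamma> \<in> set \<gamma>" "last \<gamma> \<in> set \<gamma>" by simp_all
  then show "hd \<gamma> \<in> V" "snd (hd \<gamma>) = m" "snd (last \<gamma>) = m"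
    using assms \<open>set \<gamma> \<subseteq> V\<close> by (auto simp: ends_near_def)
qed

text \<open>Either the walk leaves horizontally, and (H3') applies, or it descends to a parent close
  to W.\<close>
lemma pw_star_le_len_leave:
  assumes W: "W \<in> V" "snd W = l" and walk: "walk (pre @ [t])" "pre \<noteq> []"
    and start: "dist (fst W) (fst (hd pre)) < rad l"
    and inside: "\<forall>v\<in>set pre. snd v = Suc l \<and> dist (fst W) (fst v) < 2 * rad l"
    and leave: "\<not> (snd t = Suc l \<and> dist (fst W) (fst t) < 2 * rad l)" and "snd t \<le> Suc l"
  shows "pw_star W \<le> len (pre @ [t])"
proof -
  define L where "L = last pre"
  have L: "L \<in> V" "snd L = Suc l" "dist (fst W) (fst L) < 2 * rad l"
    using inside walk unfolding L_def walk_def by auto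
  have "edge L t" using walk walk_append_iff[of pre "[t]"] unfolding L_def by simp
  show ?thesis
  proof (cases "snd t = Suc l")
    case True
    then have "hwalk (Suc l) (pre @ [t])"
      using walk_at_level_imp_hwalk[OF walk(1)] inside by simp
    then show ?thesis
      using pw_star_le_len_exit[OF W _ walk(2) start] inside leave True by simp
  next
    case False
    then have "snd L = Suc (snd t)" using edge_snd_cases[OF \<open>edge L t\<close>] L(2) \<open>snd t \<le> Suc l\<close> by auto
    with edge_sym[OF \<open>edge L t\<close>] have t: "t = parent L" by (rule edge_parent)
    then have "t \<in> V" "snd t = l" using parent_in_V[OF L(1,2)] L(2) by simp_all
    have "dist (fst L) (fst t) < rad l" using dist_parent[OF L(1,2)] t by simp
    then have "dist (fst W) (fst t) < lam * rad l"
      using L(3) dist_triangle[of "fst W" "fst t" "fst L"] mult_rad_le_lam_rad[of 3 l] by linarith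
    then have "W = t \<or> hedge W t"
      using eq_or_hedge_if_close[OF W(1) \<open>t \<in> V\<close> _ fst_in_X[OF \<open>t \<in> V\<close>]] W(2) \<open>snd t = l\<close>
        lam_rad_pos[of l] by simp
    then have "t \<in> N W" using \<open>t \<in> V\<close> W(2) \<open>snd t = l\<close> by (auto simp: near_same_level_iff)
    then have "pw_star W \<le> pw t" by (rule star_of_le)
    also have "\<dots> \<le> elen L t" using pw_parent_le_elen[OF L(1,2)] t by simp
    also have "\<dots> \<le> len (pre @ [t])"
      using elen_last_le_len[OF walk(2)] walk(1) unfolding L_def walk_def by simp
    finally show ?thesis .
  qed
qed

lemma pw_star_parent_hd_le_len:
  assumes near: "ends_near (Suc j) x y \<gamma>" and levels: "\<forall>v\<in>set \<gamma>. snd v \<le> Suc j"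
    and far: "6 * rad j \<le> dist x y"
  shows "pw_star (parent (hd \<gamma>)) \<le> len \<gamma>"
proof -
  have walk: "walk \<gamma>" using near by (simp add: ends_near_def)
  then have "\<gamma> \<noteq> []" "set \<gamma> \<subseteq> V" by (simp_all add: walk_def)
  have h: "hd \<gamma> \<in> V" "snd (hd \<gamma>) = Suc j" and "snd (last \<gamma>) = Suc j"
    using ends_near_levels[OF near levels] by simp_all
  define W where "W = parent (hd \<gamma>)"
  have W: "W \<in> V" "snd W = j" "dist (fst W) (fst (hd \<gamma>)) < rad j"
    unfolding W_def using parent_in_V[OF h] dist_parent[OF h] h(2) by (simp_all add: dist_commute)
  let ?P = "\<lambda>v. snd v = Suc j \<and> dist (fst W) (fst v) < 2 * rad j"
  have "\<not> ?P (last \<gamma>)"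
  proof
    assume "?P (last \<gamma>)"
    moreover have "dist x (fst (hd \<gamma>)) < 2 * rad (Suc j)" "dist y (fst (last \<gamma>)) < 3 * rad (Suc j)"
      using near h(2) \<open>snd (last \<gamma>) = Suc j\<close> by (simp_all add: ends_near_def)
    moreover have "dist x y \<le> dist x (fst (hd \<gamma>)) + dist (fst (hd \<gamma>)) (fst W)
        + dist (fst W) (fst (last \<gamma>)) + dist y (fst (last \<gamma>))"
      using dist_triangle[of x y "fst (last \<gamma>)"] dist_triangle[of x "fst (last \<gamma>)" "fst W"]
        dist_triangle[of x "fst W" "fst (hd \<gamma>)"] by (simp add: dist_commute)
    ultimately show False
      using W(3) far rad_Suc_le[of j] rad_pos[of j] by (simp add: dist_commute)
  qed
  then have "\<exists>v\<in>set \<gamma>. \<not> ?P v" using \<open>\<gamma> \<noteq> []\<close> by auto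
  then obtain pre t rest where split: "\<gamma> = pre @ t # rest" and "\<not> ?P t" and "\<forall>v\<in>set pre. \<not> \<not> ?P v"
    by (rule split_list_first_propE)
  moreover have "pre \<noteq> []" using split \<open>\<not> ?P t\<close> h(2) W(3) rad_pos[of j] by (cases pre) auto
  moreover have "walk (pre @ [t])"
    using walk split walk_append_iff[of pre "t # rest"] walk_append_iff[of pre "[t]"] \<open>pre \<noteq> []\<close>
    by (simp add: walk_Cons)
  ultimately have "pw_star W \<le> len (pre @ [t])"
    using pw_star_le_len_leave[OF W(1,2)] W(3) levels by simp
  also have "\<dots> \<le> len \<gamma>" using len_prefix_le \<open>set \<gamma> \<subseteq> V\<close> split by simp
  finally show ?thesis unfolding W_def .
qed

text \<open>The great-grandparent of h lies within 2 rad n of x, hence it is the vertex c of c(x,y)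
  or horizontally adjacent to it.\<close>
lemma pw_le_pw_star_parent:
  assumes x: "x \<in> X" and h: "h \<in> V" "snd h = Suc (Suc (Suc n))" "dist x (fst h) < 2 * rad (snd h)"
    and c: "c \<in> V" "snd c = n" "dist (fst c) x < 2 * rad n"
  shows "\<eta>m\<^sup>2 * pw c \<le> K0\<^sup>2 * pw_star (parent h)"
proof -
  define w where "w = parent h"
  have w: "w \<in> V" "snd w = Suc (Suc n)" using parent_in_V[OF h(1,2)] h(2) by (simp_all add: w_def)
  have w1: "parent w \<in> V" "snd (parent w) = Suc n" using parent_in_V[OF w] w(2) by simp_all
  have w0: "parent (parent w) \<in> V" "snd (parent (parent w)) = n"
    using parent_in_V[OF w1] w1(2) by simp_all
  have "rad (Suc (Suc (Suc n))) \<le> rad n / 4"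
    using rad_Suc_le[of n] rad_Suc_le[of "Suc n"] rad_Suc_le[of "Suc (Suc n)"] rad_pos[of n] by simp
  moreover have "dist x (fst h) < 2 * rad (Suc (Suc (Suc n)))" using h(2,3) by simp
  ultimately have "dist x (fst (parent (parent w))) < 2 * rad n"
    using dist_great_grandparent[OF h(1,2)] dist_triangle[of x "fst (parent (parent w))" "fst h"]
    unfolding w_def by linarith
  then have "dist (fst c) (fst (parent (parent w))) < lam * rad n"
    using c(3) dist_triangle[of "fst c" "fst (parent (parent w))" x] mult_rad_le_lam_rad[of 4 n]
    by linarith
  then have "c = parent (parent w) \<or> hedge c (parent (parent w))"
    using eq_or_hedge_if_close[OF c(1) w0(1) _ fst_in_X[OF w0(1)]] c(2) w0(2) lam_rad_pos[of n]
    by simp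
  then have "pw c \<le> K0 * pw (parent (parent w))" by (rule pw_le_K0_mult_pw[OF w0(1)])
  then have "\<eta>m\<^sup>2 * pw c \<le> \<eta>m\<^sup>2 * (K0 * pw (parent (parent w)))"
    by (rule mult_left_mono) simp
  also have "\<dots> = K0 * (\<eta>m\<^sup>2 * pw (parent (parent w)))" by (rule mult.left_commute)
  also have "\<dots> \<le> K0 * pw w" using eta_sq_mult_pw_le[OF w] K0_ge_1 by simp
  also have "\<dots> \<le> K0 * (K0 * pw_star w)" using pw_le_K0_mult_pw_star[OF w(1)] K0_ge_1 by simp
  finally show ?thesis by (simp add: w_def power2_eq_square mult.assoc)
qed

theorem pi_c_le_len:
  assumes "diameter X < 2" and x: "x \<in> X" and y: "y \<in> X" and "x \<noteq> y"
    and k: "c_level X a Xs x y + 3 \<le> k"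
    and u: "u \<in> level Xs k" "x \<in> Bv X a u" and v: "v \<in> level Xs k" "y \<in> Bv X a v"
    and \<gamma>: "walk \<gamma>" "hd \<gamma> = u" "last \<gamma> = v"
  shows "\<eta>m\<^sup>2 * pi_c \<rho> par X a Xs x y \<le> K0\<^sup>2 * len \<gamma>"
proof -
  define n where "n = c_level X a Xs x y"
  obtain c where c: "c \<in> c_set X a Xs x y" "pi_c \<rho> par X a Xs x y = pw c"
    using pi_c_attained[OF assms(1-4)] .
  then have c': "c \<in> V" "snd c = n" "dist (fst c) x < 2 * rad n"
    by (auto simp: c_set_iff n_def Xball_def)
  have "snd u = k" "snd v = k" "dist x (fst u) < rad k" "dist y (fst v) < rad k"
    using u v by (auto simp: level_iff Bv_def Xball_def rad_def dist_commute)
  then have "ends_near (Suc (Suc (Suc n))) x y \<gamma>"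
    using \<gamma> k rad_pos[of k] by (simp add: ends_near_def n_def)
  moreover have "\<forall>w\<in>set \<gamma>. snd w \<le> Max (snd ` set \<gamma>)" by simp
  ultimately obtain \<gamma>' where \<gamma>': "ends_near (Suc (Suc (Suc n))) x y \<gamma>'"
    "\<forall>w\<in>set \<gamma>'. snd w \<le> Suc (Suc (Suc n))" "len \<gamma>' \<le> len \<gamma>"
    using ex_lowering_to_level by blast
  have "6 * rad (Suc (Suc n)) \<le> dist x y"
    using c_level_spec(2)[OF assms(1-4)] rad_Suc_le[of "Suc n"] unfolding n_def by linarith
  then have star: "pw_star (parent (hd \<gamma>')) \<le> len \<gamma>'" by (rule pw_star_parent_hd_le_len[OF \<gamma>'(1,2)])
  have hd: "hd \<gamma>' \<in> V" "snd (hd \<gamma>') = Suc (Suc (Suc n))"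
    "dist x (fst (hd \<gamma>')) < 2 * rad (snd (hd \<gamma>'))"
    using ends_near_levels[OF \<gamma>'(1,2)] \<gamma>'(1) by (simp_all add: ends_near_def)
  have "\<eta>m\<^sup>2 * pi_c \<rho> par X a Xs x y \<le> K0\<^sup>2 * pw_star (parent (hd \<gamma>'))"
    using pw_le_pw_star_parent[OF x hd c'] c(2) by simp
  also have "\<dots> \<le> K0\<^sup>2 * len \<gamma>" using star \<gamma>'(3) by (simp add: mult_left_mono)
  finally show ?thesis .
qed

end

theorem lemma3p20:
  fixes X :: "'a::metric_space set" and a lam :: real and x0 :: 'a
    and Xs :: "nat \<Rightarrow> 'a set" and par :: "'a \<Rightarrow> nat \<Rightarrow> 'a"
    and \<rho> :: "'a \<times> nat \<Rightarrow> real" and \<eta>m \<eta>p K0 :: real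
  assumes "compact X" and "doubling X" and "diameter X = 1/2"
    and "hyperbolic_filling X a lam x0 Xs par"
    and "a \<ge> lam" and "lam \<ge> 6"
    and rho_pos: "\<forall>v\<in>vertices Xs. \<rho> v > 0"
    and H1: "0 < \<eta>m" "\<eta>m \<le> \<eta>p" "\<eta>p < 1" "\<forall>v\<in>vertices Xs. \<eta>m \<le> \<rho> v \<and> \<rho> v \<le> \<eta>p"
    and H2: "K0 \<ge> 1" "\<forall>u w. horiz_adj X a lam Xs u w \<longrightarrow> piw \<rho> par u \<le> K0 * piw \<rho> par w"
    and H3': "\<forall>k. \<forall>w\<in>level Xs k. \<forall>\<gamma>\<in>Gamma X a lam Xs k w. L_h \<rho> X a lam Xs par \<gamma> \<ge> 1"
  shows "\<exists>K2\<ge>1. \<forall>x\<in>X. \<forall>y\<in>X. x \<noteq> y \<longrightarrow>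
           (\<exists>k0. \<forall>k\<ge>k0. \<forall>u\<in>level Xs k. \<forall>v\<in>level Xs k.
              x \<in> Bv X a u \<and> y \<in> Bv X a v \<longrightarrow>
              (\<forall>\<gamma>. is_path X a lam Xs par \<gamma> \<and> hd \<gamma> = u \<and> last \<gamma> = v \<longrightarrow>
                 path_len \<rho> K0 \<eta>m X a lam Xs par \<gamma> \<ge> pi_c \<rho> par X a Xs x y / K2))"
proof -
  interpret weighted_filling X a lam x0 Xs par \<rho> \<eta>m K0
    using assms by unfold_locales auto
  have "\<eta>m\<^sup>2 \<le> K0\<^sup>2" using H1(1-3) H2(1) by (intro power_mono) auto
  then have "1 \<le> K0\<^sup>2 / \<eta>m\<^sup>2" using H1(1) by simp
  moreover have "pi_c \<rho> par X a Xs x y / (K0\<^sup>2 / \<eta>m\<^sup>2) \<le> path_len \<rho> K0 \<eta>m X a lam Xs par \<gamma>"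
    if "x \<in> X" "y \<in> X" "x \<noteq> y" "c_level X a Xs x y + 3 \<le> k" "u \<in> level Xs k" "v \<in> level Xs k"
      "x \<in> Bv X a u" "y \<in> Bv X a v" "is_path X a lam Xs par \<gamma>" "hd \<gamma> = u" "last \<gamma> = v"
    for x y k u v \<gamma>
    using pi_c_le_len[of x y k u v \<gamma>] that assms(3) H1(1) H2(1)
    by (simp add: walk_iff_is_path path_len_eq_len field_simps)
  ultimately show ?thesis by blast
qed

end
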